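(* Let $k\ge1$, $1\le r\le(2k+1)^2$, $\mathcal{B}=\mathcal{B}(2k+1,2k+1;r)$ and $G=D_4$. Then \[|\mathcal{O}_G(\mathcal{B})|=\frac18\left(\binom{(2k+1)^2}{r}+2\binom{k(k+1)}{\frac r4}+2\binom{k(k+1)}{\frac{r-1}{4}}+\binom{2k(k+1)}{\lfloor\frac r2\rfloor}+4\sum_{t=0}^{r}\binom{2k+1}{t}\binom{k(2k+1)}{\frac{r-t}{2}}\right).\]
   Context: $\mathcal{B}(2k+1,2k+1;r)$ is the set of all subsets of exactly $r$ cells (boards with $r$ blocked cells) of a $(2k+1)\times(2k+1)$ grid. The dihedral group $D_4$ of the 8 symmetries of the square (four rotations about the center and reflections across the horizontal midline, vertical midline and both diagonals) acts on boards; $\mathcal{O}_G(\mathcal{B})$ is the set of orbits (equivalence classes). Convention: a binomial coefficient $\binom{a}{b}$ is $0$ when $b$ is not a nonnegative integer or $b>a$. *)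

theory Defs
  imports Complex_Main
begin

definition grid :: "nat \<Rightarrow> (nat \<times> nat) set" where
  "grid n = {0..<n} \<times> {0..<n}"

definition boards :: "nat \<Rightarrow> nat \<Rightarrow> (nat \<times> nat) set set" where
  "boards n r = {B. B \<subseteq> grid n \<and> card B = r}"

definition D4 :: "nat \<Rightarrow> ((nat \<times> nat) \<Rightarrow> (nat \<times> nat)) set" where
  "D4 n = {
     (\<lambda>(i,j). (i, j)),
     (\<lambda>(i,j). (j, n - 1 - i)),
     (\<lambda>(i,j). (n - 1 - i, n - 1 - j)),
     (\<lambda>(i,j). (n - 1 - j, i)),
     (\<lambda>(i,j). (n - 1 - i, j)),
     (\<lambda>(i,j). (i, n - 1 - j)),
     (\<lambda>(i,j). (j, i)),
     (\<lambda>(i,j). (n - 1 - j, n - 1 - i))}"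

definition orbit :: "nat \<Rightarrow> (nat \<times> nat) set \<Rightarrow> (nat \<times> nat) set set" where
  "orbit n B = (\<lambda>g. g ` B) ` D4 n"

definition orbits :: "nat \<Rightarrow> nat \<Rightarrow> (nat \<times> nat) set set set" where
  "orbits n r = orbit n ` boards n r"

(* Binomial coefficient with a rational lower argument; 0 unless the lower
   argument is a nonnegative integer (and a choose b = 0 for b > a). *)
definition binq :: "nat \<Rightarrow> rat \<Rightarrow> nat" where
  "binq a b = (if b \<in> \<int> \<and> b \<ge> 0 then a choose (nat \<lfloor>b\<rfloor>) else 0)"

end

(*
  Burnside's lemma: the number of orbits is the average, over the eight symmetries g, of the
  number of boards fixed by g. A board is fixed by g exactly when it is a union of cycles of g
  on the cells; so if g fixes F cells and permutes the remaining ones in cycles of a common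
  length L, the fixed r-boards are counted by choosing t fixed cells and (r - t)/L of the
  (n^2 - F)/L cycles. On the (2k+1) x (2k+1) grid the two quarter turns fix only the centre and
  have k(k+1) cycles of length 4, the half turn fixes the centre and has 2k(k+1) transpositions,
  and each reflection fixes the 2k+1 cells of its axis and has k(2k+1) transpositions.
*)

theory Submission
  imports "HOL-Combinatorics.Orbits" "HOL-Algebra.Group_Action" Defs
begin

lemma binq_of_nat_div:
  assumes "L > 0"
  shows "binq a (of_nat m / of_nat L) = (if L dvd m then a choose (m div L) else 0)"
proof (cases "L dvd m")
  case True
  then obtain d where "m = L * d" by blast
  then show ?thesis using assms by (simp add: binq_def)
next
  case False
  have "(of_nat m / of_nat L :: rat) \<notin> \<int>"
  proof
    assume "(of_nat m / of_nat L :: rat) \<in> \<int>"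
    then obtain z where "(of_nat m / of_nat L :: rat) = of_int z" by (auto elim: Ints_cases)
    then have "(of_nat m :: rat) = of_int z * of_nat L" using assms by (simp add: divide_eq_eq)
    then have "int m = z * int L" by (metis of_int_eq_iff of_int_mult of_int_of_nat_eq)
    then show False using False by (metis dvd_triv_right int_dvd_int_iff)
  qed
  then show ?thesis using False by (simp add: binq_def)
qed

lemma card_subsets_scaled_card:
  assumes "L > 0" and "finite Q"
  shows "card {Q'. Q' \<subseteq> Q \<and> L * card Q' = m} = binq (card Q) (of_nat m / of_nat L)"
proof (cases "L dvd m")
  case True
  then have "{Q'. Q' \<subseteq> Q \<and> L * card Q' = m} = {Q'. Q' \<subseteq> Q \<and> card Q' = m div L}"
    using assms(1) by auto
  then show ?thesis using True assms by (simp add: binq_of_nat_div n_subsets)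
next
  case False
  then have "{Q'. Q' \<subseteq> Q \<and> L * card Q' = m} = {}" by auto
  with False assms(1) show ?thesis by (simp only: binq_of_nat_div) simp
qed

lemma card_Union_blocks:
  assumes "finite Q" and "pairwise disjnt Q" and "\<forall>c\<in>Q. card c = L" and "L > 0"
  shows "card (\<Union>Q) = L * card Q"
proof -
  have "finite c" if "c \<in> Q" for c
    using that assms(3,4) by (metis card_ge_0_finite)
  then have "card (\<Union>Q) = sum card Q"
    using assms(2) by (intro card_Union_disjoint) auto
  also have "\<dots> = L * card Q"
    using assms(3) by simp
  finally show ?thesis .
qed

lemma blocks_of_union_of_blocks:
  assumes "pairwise disjnt Q" and "{} \<notin> Q" and "F \<inter> \<Union>Q = {}" and "S \<subseteq> F" and "Q' \<subseteq> Q"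
  shows "{c \<in> Q. c \<subseteq> S \<union> \<Union>Q'} = Q'"
proof
  show "{c \<in> Q. c \<subseteq> S \<union> \<Union>Q'} \<subseteq> Q'"
  proof clarify
    fix c assume c: "c \<in> Q" "c \<subseteq> S \<union> \<Union>Q'"
    obtain z where "z \<in> c" using c(1) assms(2) by (metis ex_in_conv)
    then obtain c' where "c' \<in> Q'" "z \<in> c'" using c assms(3,4) by blast
    then show "c \<in> Q'"
      using \<open>z \<in> c\<close> c(1) assms(1,5) by (metis disjnt_iff pairwise_def subsetD)
  qed
qed (use assms(5) in blast)

lemma union_of_blocks_saturated:
  assumes "pairwise disjnt Q" and "F \<inter> \<Union>Q = {}" and "S \<subseteq> F" and "Q' \<subseteq> Q" and "c \<in> Q"
  shows "c \<subseteq> S \<union> \<Union>Q' \<or> c \<inter> (S \<union> \<Union>Q') = {}"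
proof (cases "c \<in> Q'")
  case False
  have "disjnt c c'" if "c' \<in> Q'" for c'
    using pairwiseD[OF assms(1,5), of c'] that assms(4) False by blast
  then have "c \<inter> \<Union>Q' = {}" by (auto simp: disjnt_def)
  moreover have "c \<inter> S = {}" using assms(2,3,5) by blast
  ultimately show ?thesis by (simp add: Int_Un_distrib)
qed blast

lemma saturated_eq_union_of_blocks:
  assumes "B \<subseteq> F \<union> \<Union>Q" and "\<forall>c\<in>Q. c \<subseteq> B \<or> c \<inter> B = {}"
  shows "B \<inter> F \<union> \<Union>{c \<in> Q. c \<subseteq> B} = B"
proof
  show "B \<subseteq> B \<inter> F \<union> \<Union>{c \<in> Q. c \<subseteq> B}"
  proof
    fix x assume x: "x \<in> B"
    show "x \<in> B \<inter> F \<union> \<Union>{c \<in> Q. c \<subseteq> B}"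
    proof (cases "x \<in> F")
      case False
      then obtain c where c: "c \<in> Q" "x \<in> c" using assms(1) x by blast
      with assms(2) x have "c \<subseteq> B" by blast
      with c show ?thesis by blast
    qed (use x in blast)
  qed
qed blast

lemma bij_betw_unions_of_blocks:
  assumes "pairwise disjnt Q" and "{} \<notin> Q" and "F \<inter> \<Union>Q = {}"
  shows "bij_betw (\<lambda>(S, Q'). S \<union> \<Union>Q') (Pow F \<times> Pow Q)
           {B. B \<subseteq> F \<union> \<Union>Q \<and> (\<forall>c\<in>Q. c \<subseteq> B \<or> c \<inter> B = {})}"
proof (rule bij_betw_byWitness[where f' = "\<lambda>B. (B \<inter> F, {c\<in>Q. c \<subseteq> B})"])
  show "\<forall>p\<in>Pow F \<times> Pow Q. (\<lambda>B. (B \<inter> F, {c\<in>Q. c \<subseteq> B})) ((\<lambda>(S, Q'). S \<union> \<Union>Q') p) = p"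
  proof
    fix p assume "p \<in> Pow F \<times> Pow Q"
    then obtain S Q' where p: "p = (S, Q')" and S: "S \<subseteq> F" and Q': "Q' \<subseteq> Q" by blast
    moreover have "(S \<union> \<Union>Q') \<inter> F = S" using S Q' assms(3) by blast
    ultimately show "(\<lambda>B. (B \<inter> F, {c\<in>Q. c \<subseteq> B})) ((\<lambda>(S, Q'). S \<union> \<Union>Q') p) = p"
      using blocks_of_union_of_blocks[OF assms S Q'] by simp
  qed
  show "\<forall>B\<in>{B. B \<subseteq> F \<union> \<Union>Q \<and> (\<forall>c\<in>Q. c \<subseteq> B \<or> c \<inter> B = {})}.
          (\<lambda>(S, Q'). S \<union> \<Union>Q') ((\<lambda>B. (B \<inter> F, {c\<in>Q. c \<subseteq> B})) B) = B"
    by (simp add: saturated_eq_union_of_blocks)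
  show "(\<lambda>(S, Q'). S \<union> \<Union>Q') ` (Pow F \<times> Pow Q)
          \<subseteq> {B. B \<subseteq> F \<union> \<Union>Q \<and> (\<forall>c\<in>Q. c \<subseteq> B \<or> c \<inter> B = {})}"
  proof
    fix B assume "B \<in> (\<lambda>(S, Q'). S \<union> \<Union>Q') ` (Pow F \<times> Pow Q)"
    then obtain S Q' where B: "B = S \<union> \<Union>Q'" and S: "S \<subseteq> F" and Q': "Q' \<subseteq> Q" by auto
    then have "B \<subseteq> F \<union> \<Union>Q" by blast
    with union_of_blocks_saturated[OF assms(1,3) S Q'] B
    show "B \<in> {B. B \<subseteq> F \<union> \<Union>Q \<and> (\<forall>c\<in>Q. c \<subseteq> B \<or> c \<inter> B = {})}"
      by simp
  qed
qed auto

lemma card_unions_of_blocks: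
  assumes "finite F" and "finite Q" and "pairwise disjnt Q" and "\<forall>c\<in>Q. card c = L"
    and "L > 0" and "F \<inter> \<Union>Q = {}"
  shows "card {B. B \<subseteq> F \<union> \<Union>Q \<and> card B = r \<and> (\<forall>c\<in>Q. c \<subseteq> B \<or> c \<inter> B = {})}
    = (\<Sum>t=0..r. (card F choose t) * card {Q'. Q' \<subseteq> Q \<and> L * card Q' = r - t})"
proof -
  define f where "f = (\<lambda>(S, Q'). S \<union> \<Union>Q' :: 'a set)"
  define T where "T = {B. B \<subseteq> F \<union> \<Union>Q \<and> (\<forall>c\<in>Q. c \<subseteq> B \<or> c \<inter> B = {})}"
  have card_f: "card (f (S, Q')) = card S + L * card Q'" if S: "S \<subseteq> F" and Q': "Q' \<subseteq> Q" for S Q'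
  proof -
    have "finite Q'" using Q' assms(2) by (rule finite_subset)
    moreover have "\<forall>c\<in>Q'. card c = L" using Q' assms(4) by blast
    ultimately have "card (\<Union>Q') = L * card Q'"
      using pairwise_subset[OF assms(3) Q'] assms(5) by (intro card_Union_blocks)
    moreover have "finite (\<Union>Q')"
      using \<open>finite Q'\<close> \<open>\<forall>c\<in>Q'. card c = L\<close> assms(5) by (metis card_ge_0_finite finite_Union)
    moreover have "finite S" using S assms(1) by (rule finite_subset)
    moreover have "S \<inter> \<Union>Q' = {}" using S Q' assms(6) by blast
    ultimately show ?thesis by (simp add: f_def card_Un_disjoint)
  qed
  have "{} \<notin> Q" using assms(4,5) by auto
  with assms(3,6) have "bij_betw f (Pow F \<times> Pow Q) T"
    unfolding f_def T_def by (intro bij_betw_unions_of_blocks)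
  then have "bij_betw f {p \<in> Pow F \<times> Pow Q. card (f p) = r} {B \<in> T. card B = r}"
    by (rule bij_betw_Collect) simp
  moreover have "{B \<in> T. card B = r} = {B. B \<subseteq> F \<union> \<Union>Q \<and> card B = r \<and> (\<forall>c\<in>Q. c \<subseteq> B \<or> c \<inter> B = {})}"
    by (auto simp: T_def)
  moreover have "{p \<in> Pow F \<times> Pow Q. card (f p) = r} =
      (\<Union>t\<in>{0..r}. {S. S \<subseteq> F \<and> card S = t} \<times> {Q'. Q' \<subseteq> Q \<and> L * card Q' = r - t})"
    by (auto simp: card_f)
  ultimately have "card {B. B \<subseteq> F \<union> \<Union>Q \<and> card B = r \<and> (\<forall>c\<in>Q. c \<subseteq> B \<or> c \<inter> B = {})} =
      card (\<Union>t\<in>{0..r}. {S. S \<subseteq> F \<and> card S = t} \<times> {Q'. Q' \<subseteq> Q \<and> L * card Q' = r - t})"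
    by (simp add: bij_betw_same_card)
  also have "\<dots> = (\<Sum>t=0..r. (card F choose t) * card {Q'. Q' \<subseteq> Q \<and> L * card Q' = r - t})"
    using assms(1,2) by (subst card_UN_disjoint) (auto simp: card_cartesian_product n_subsets)
  finally show ?thesis .
qed

lemma orbit_eq_image_funpow:
  assumes "(f ^^ n) x = x" and "0 < n"
  shows "Orbits.orbit f x = (\<lambda>m. (f ^^ m) x) ` {..<n}"
  unfolding orbit_altdef_bounded[OF assms] by blast

locale periodic_map =
  fixes U :: "'a set" and g :: "'a \<Rightarrow> 'a" and L :: nat
  assumes maps_to: "x \<in> U \<Longrightarrow> g x \<in> U"
    and period_pos: "L > 0"
    and periodic: "x \<in> U \<Longrightarrow> (g ^^ L) x = x"
begin

lemma self_in_orbit: "x \<in> U \<Longrightarrow> x \<in> Orbits.orbit g x"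
  using periodic period_pos by (force simp: orbit_altdef)

lemma orbit_subset: "x \<in> U \<Longrightarrow> Orbits.orbit g x \<subseteq> U"
proof
  fix y assume "x \<in> U" and "y \<in> Orbits.orbit g x"
  from \<open>y \<in> Orbits.orbit g x\<close> show "y \<in> U"
    by (induction rule: orbit.induct) (auto intro: maps_to \<open>x \<in> U\<close>)
qed

lemma orbit_eq:
  assumes "x \<in> U" and "y \<in> Orbits.orbit g x"
  shows "Orbits.orbit g y = Orbits.orbit g x"
proof
  show "Orbits.orbit g y \<subseteq> Orbits.orbit g x"
    using assms(2) by (auto intro: orbit_trans)
  have "x \<in> Orbits.orbit g y"
    using orbit_swap[OF self_in_orbit[OF assms(1)] assms(2)] .
  then show "Orbits.orbit g x \<subseteq> Orbits.orbit g y"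
    by (auto intro: orbit_trans)
qed

lemma invariant_iff_orbit_closed:
  assumes "B \<subseteq> U"
  shows "g ` B = B \<longleftrightarrow> (\<forall>x\<in>B. Orbits.orbit g x \<subseteq> B)"
proof
  assume "g ` B = B"
  then have step: "g y \<in> B" if "y \<in> B" for y using that by blast
  show "\<forall>x\<in>B. Orbits.orbit g x \<subseteq> B"
  proof (intro ballI subsetI)
    fix x y assume "x \<in> B" and "y \<in> Orbits.orbit g x"
    from \<open>y \<in> Orbits.orbit g x\<close> show "y \<in> B"
      by (induction rule: orbit.induct) (auto intro: step \<open>x \<in> B\<close>)
  qed
next
  assume closed: "\<forall>x\<in>B. Orbits.orbit g x \<subseteq> B"
  have "g ` B \<subseteq> B"
  proof
    fix y assume "y \<in> g ` B"
    then obtain x where "x \<in> B" and "y = g x" by blast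
    with closed orbit.base[of g x] show "y \<in> B" by blast
  qed
  moreover have "B \<subseteq> g ` B"
  proof
    fix x assume x: "x \<in> B"
    with assms have "x \<in> U" by blast
    obtain m where m: "L = Suc m" using period_pos gr0_implies_Suc by blast
    have "x = (g ^^ L) x" using periodic[OF \<open>x \<in> U\<close>] by (rule sym)
    also have "\<dots> = g ((g ^^ m) x)" by (simp only: m funpow.simps(2) o_apply)
    finally have "x = g ((g ^^ m) x)" .
    moreover have "(g ^^ m) x \<in> Orbits.orbit g x"
      using funpow_in_orbit[OF self_in_orbit[OF \<open>x \<in> U\<close>]] .
    with closed x have "(g ^^ m) x \<in> B" by blast
    ultimately show "x \<in> g ` B" by (rule image_eqI)
  qed
  ultimately show "g ` B = B" ..
qed

lemma pairwise_disjnt_orbits: "pairwise disjnt (Orbits.orbit g ` U)"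
proof (rule pairwiseI)
  fix c c' assume "c \<in> Orbits.orbit g ` U" "c' \<in> Orbits.orbit g ` U" and "c \<noteq> c'"
  then obtain x x' where x: "x \<in> U" "c = Orbits.orbit g x" and x': "x' \<in> U" "c' = Orbits.orbit g x'"
    by blast
  show "disjnt c c'"
    unfolding disjnt_iff
  proof (intro allI notI, elim conjE)
    fix z assume "z \<in> c" "z \<in> c'"
    then have "c = Orbits.orbit g z" and "c' = Orbits.orbit g z"
      using orbit_eq[OF x(1), of z] orbit_eq[OF x'(1), of z] x(2) x'(2) by simp_all
    with \<open>c \<noteq> c'\<close> show False by simp
  qed
qed

lemma orbit_subset_moving:
  assumes "x \<in> U" and "g x \<noteq> x"
  shows "Orbits.orbit g x \<subseteq> {y \<in> U. g y \<noteq> y}"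
proof
  fix y assume y: "y \<in> Orbits.orbit g x"
  have "g y \<noteq> y"
  proof
    assume "g y = y"
    then have "Orbits.orbit g y = {y}" by (simp add: orbit_eq_singleton_iff)
    with orbit_eq[OF assms(1) y] have "Orbits.orbit g x = {y}" by simp
    then show False using self_in_orbit[OF assms(1)] assms(2) \<open>g y = y\<close> by simp
  qed
  with orbit_subset[OF assms(1)] y show "y \<in> {y \<in> U. g y \<noteq> y}" by blast
qed

lemma invariant_iff_union_of_orbits:
  assumes "B \<subseteq> U"
  shows "g ` B = B \<longleftrightarrow> (\<forall>c \<in> Orbits.orbit g ` {x \<in> U. g x \<noteq> x}. c \<subseteq> B \<or> c \<inter> B = {})"
proof -
  have "(\<forall>x\<in>B. Orbits.orbit g x \<subseteq> B) \<longleftrightarrow>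
      (\<forall>x \<in> {x \<in> U. g x \<noteq> x}. Orbits.orbit g x \<subseteq> B \<or> Orbits.orbit g x \<inter> B = {})"
  proof (intro iffI ballI)
    fix x assume closed: "\<forall>x\<in>B. Orbits.orbit g x \<subseteq> B" and "x \<in> {x \<in> U. g x \<noteq> x}"
    show "Orbits.orbit g x \<subseteq> B \<or> Orbits.orbit g x \<inter> B = {}"
    proof (cases "Orbits.orbit g x \<inter> B = {}")
      case False
      then obtain z where "z \<in> Orbits.orbit g x" and "z \<in> B" by blast
      moreover have "x \<in> U" using \<open>x \<in> {x \<in> U. g x \<noteq> x}\<close> by simp
      ultimately have "Orbits.orbit g x = Orbits.orbit g z" using orbit_eq by simp
      with closed \<open>z \<in> B\<close> show ?thesis by simp
    qed simp
  next
    fix x assume blocks: "\<forall>x \<in> {x \<in> U. g x \<noteq> x}. Orbits.orbit g x \<subseteq> B \<or> Orbits.orbit g x \<inter> B = {}"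
      and "x \<in> B"
    with assms have "x \<in> U" by blast
    show "Orbits.orbit g x \<subseteq> B"
    proof (cases "g x = x")
      case True
      then have "Orbits.orbit g x = {x}" by (rule orbit_eq_singleton_iff[THEN iffD2])
      with \<open>x \<in> B\<close> show ?thesis by simp
    next
      case False
      with blocks \<open>x \<in> U\<close> have "Orbits.orbit g x \<subseteq> B \<or> Orbits.orbit g x \<inter> B = {}" by simp
      moreover have "x \<in> Orbits.orbit g x \<inter> B" using self_in_orbit[OF \<open>x \<in> U\<close>] \<open>x \<in> B\<close> by simp
      ultimately show ?thesis by blast
    qed
  qed
  then show ?thesis using invariant_iff_orbit_closed[OF assms] by simp
qed

lemma card_invariant_subsets:
  assumes "finite U" and orbit_card: "\<And>x. x \<in> U \<Longrightarrow> g x \<noteq> x \<Longrightarrow> card (Orbits.orbit g x) = L"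
  shows "card {B. B \<subseteq> U \<and> card B = r \<and> g ` B = B} =
    (\<Sum>t=0..r. (card {x \<in> U. g x = x} choose t) *
       binq ((card U - card {x \<in> U. g x = x}) div L) ((of_nat r - of_nat t) / of_nat L))"
proof -
  define F where "F = {x \<in> U. g x = x}"
  define Q where "Q = Orbits.orbit g ` {x \<in> U. g x \<noteq> x}"
  have "finite F" and "finite Q" using assms(1) by (simp_all add: F_def Q_def)
  have Q_disjnt: "pairwise disjnt Q"
    unfolding Q_def using pairwise_disjnt_orbits by (rule pairwise_subset) blast
  have Q_card: "\<forall>c\<in>Q. card c = L" using orbit_card by (auto simp: Q_def)
  have "\<Union>Q = {x \<in> U. g x \<noteq> x}"
  proof
    show "\<Union>Q \<subseteq> {x \<in> U. g x \<noteq> x}" using orbit_subset_moving by (auto simp: Q_def)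
    show "{x \<in> U. g x \<noteq> x} \<subseteq> \<Union>Q" using self_in_orbit by (auto simp: Q_def)
  qed
  then have U_split: "U = F \<union> \<Union>Q" and F_disjoint: "F \<inter> \<Union>Q = {}" by (auto simp: F_def)
  have "card U = card F + L * card Q"
    using card_Un_disjoint[OF \<open>finite F\<close> _ F_disjoint] card_Union_blocks[OF \<open>finite Q\<close> Q_disjnt Q_card period_pos]
      assms(1) U_split by (metis finite_Un)
  then have card_Q: "card Q = (card U - card F) div L" using period_pos by simp
  have "{B. B \<subseteq> U \<and> card B = r \<and> g ` B = B} =
      {B. B \<subseteq> U \<and> card B = r \<and> (\<forall>c\<in>Q. c \<subseteq> B \<or> c \<inter> B = {})}"
  proof (rule Collect_cong)
    fix B
    show "B \<subseteq> U \<and> card B = r \<and> g ` B = B \<longleftrightarrow>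
        B \<subseteq> U \<and> card B = r \<and> (\<forall>c\<in>Q. c \<subseteq> B \<or> c \<inter> B = {})"
      using invariant_iff_union_of_orbits[of B] unfolding Q_def by blast
  qed
  also have "card \<dots> = (\<Sum>t=0..r. (card F choose t) * card {Q'. Q' \<subseteq> Q \<and> L * card Q' = r - t})"
    unfolding U_split by (rule card_unions_of_blocks[OF \<open>finite F\<close> \<open>finite Q\<close> Q_disjnt Q_card period_pos F_disjoint])
  also have "\<dots> = (\<Sum>t=0..r. (card F choose t) *
      binq ((card U - card F) div L) ((of_nat r - of_nat t) / of_nat L))"
    by (rule sum.cong) (simp_all add: card_subsets_scaled_card \<open>finite Q\<close> period_pos of_nat_diff card_Q)
  finally show ?thesis unfolding F_def .
qed

end

lemma group_actionI:
  assumes G: "group G"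
    and closed: "\<And>g x. g \<in> carrier G \<Longrightarrow> x \<in> E \<Longrightarrow> \<phi> g x \<in> E"
    and extensional: "\<And>g. g \<in> carrier G \<Longrightarrow> \<phi> g \<in> extensional E"
    and one: "\<And>x. x \<in> E \<Longrightarrow> \<phi> \<one>\<^bsub>G\<^esub> x = x"
    and mult: "\<And>g h x. g \<in> carrier G \<Longrightarrow> h \<in> carrier G \<Longrightarrow> x \<in> E \<Longrightarrow>
      \<phi> (g \<otimes>\<^bsub>G\<^esub> h) x = \<phi> g (\<phi> h x)"
  shows "group_action G E \<phi>"
proof -
  have Bij: "\<phi> g \<in> Bij E" if g: "g \<in> carrier G" for g
  proof -
    have g': "inv\<^bsub>G\<^esub> g \<in> carrier G" using group.inv_closed[OF G g] .
    have "bij_betw (\<phi> g) E E"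
    proof (rule bij_betw_byWitness[where f' = "\<phi> (inv\<^bsub>G\<^esub> g)"])
      show "\<forall>x\<in>E. \<phi> (inv\<^bsub>G\<^esub> g) (\<phi> g x) = x"
        using mult[OF g' g] one group.l_inv[OF G g] by simp
      show "\<forall>x\<in>E. \<phi> g (\<phi> (inv\<^bsub>G\<^esub> g) x) = x"
        using mult[OF g g'] one group.r_inv[OF G g] by simp
      show "\<phi> g ` E \<subseteq> E" and "\<phi> (inv\<^bsub>G\<^esub> g) ` E \<subseteq> E"
        using closed g g' by blast+
    qed
    with extensional[OF g] show ?thesis by (simp add: Bij_def)
  qed
  have "\<phi> (g \<otimes>\<^bsub>G\<^esub> h) = \<phi> g \<otimes>\<^bsub>BijGroup E\<^esub> \<phi> h"
    if "g \<in> carrier G" and "h \<in> carrier G" for g h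
  proof (rule extensionalityI[OF extensional])
    show "g \<otimes>\<^bsub>G\<^esub> h \<in> carrier G" using group.subgroup_self[OF G] that by (simp add: subgroup.m_closed)
    show "\<phi> g \<otimes>\<^bsub>BijGroup E\<^esub> \<phi> h \<in> extensional E"
      using Bij that by (simp add: BijGroup_def compose_def)
    show "\<phi> (g \<otimes>\<^bsub>G\<^esub> h) x = (\<phi> g \<otimes>\<^bsub>BijGroup E\<^esub> \<phi> h) x" if "x \<in> E" for x
      using Bij mult \<open>x \<in> E\<close> \<open>g \<in> carrier G\<close> \<open>h \<in> carrier G\<close> by (simp add: BijGroup_def compose_def)
  qed
  with Bij show ?thesis
    unfolding group_action_def group_hom_def group_hom_axioms_def hom_def
    using G group_BijGroup[of E] by (simp add: BijGroup_def)
qed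

lemma (in group_action) group_action_on_card_subsets:
  "group_action G {B. B \<subseteq> E \<and> card B = r} (\<lambda>g. \<lambda>B \<in> {B. B \<subseteq> E \<and> card B = r}. \<phi> g ` B)"
proof (rule group_actionI)
  show "group G" using group_hom group_hom.axioms(1) by blast
  fix g B assume g: "g \<in> carrier G" and B: "B \<in> {B. B \<subseteq> E \<and> card B = r}"
  then have "\<phi> g ` B \<subseteq> E" and "card (\<phi> g ` B) = r"
    using surj_prop[OF g] card_image[OF inj_on_subset[OF inj_prop[OF g]]] by auto
  with B show "(\<lambda>B \<in> {B. B \<subseteq> E \<and> card B = r}. \<phi> g ` B) B \<in> {B. B \<subseteq> E \<and> card B = r}"
    by simp
next
  fix B assume B: "B \<in> {B. B \<subseteq> E \<and> card B = r}"
  have "\<phi> \<one> x = x" if "x \<in> E" for x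
    using that by (simp flip: id_eq_one)
  with B show "(\<lambda>B \<in> {B. B \<subseteq> E \<and> card B = r}. \<phi> \<one> ` B) B = B"
    by (auto simp: subset_iff)
next
  fix g h B assume g: "g \<in> carrier G" and h: "h \<in> carrier G" and B: "B \<in> {B. B \<subseteq> E \<and> card B = r}"
  then have "\<phi> (g \<otimes> h) ` B = (\<lambda>x. \<phi> g (\<phi> h x)) ` B"
    using composition_rule[OF _ g h] by (intro image_cong) auto
  then have "\<phi> (g \<otimes> h) ` B = \<phi> g ` \<phi> h ` B"
    by (simp add: image_image)
  moreover have "\<phi> h ` B \<in> {B. B \<subseteq> E \<and> card B = r}"
    using B surj_prop[OF h] card_image[OF inj_on_subset[OF inj_prop[OF h]]] by auto
  ultimately show "(\<lambda>B \<in> {B. B \<subseteq> E \<and> card B = r}. \<phi> (g \<otimes> h) ` B) B =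
      (\<lambda>B \<in> {B. B \<subseteq> E \<and> card B = r}. \<phi> g ` B) ((\<lambda>B \<in> {B. B \<subseteq> E \<and> card B = r}. \<phi> h ` B) B)"
    using B by simp
qed simp

(*
  The group is taken on these indices rather than on the maps,
  which are not invertible off the grid (truncated subtraction) and all agree on the grid
  when n = 1.
*)
definition flip :: "nat \<Rightarrow> bool \<Rightarrow> nat \<Rightarrow> nat" where
  "flip n b p = (if b then n - 1 - p else p)"

definition dihedral :: "nat \<Rightarrow> bool \<times> bool \<times> bool \<Rightarrow> nat \<times> nat \<Rightarrow> nat \<times> nat" where
  "dihedral n = (\<lambda>(s, a, b) (i, j). (flip n a (if s then j else i), flip n b (if s then i else j)))"

definition dihedral_mult :: "bool \<times> bool \<times> bool \<Rightarrow> bool \<times> bool \<times> bool \<Rightarrow> bool \<times> bool \<times> bool" where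
  "dihedral_mult = (\<lambda>(s, a, b) (s', a', b').
     (s \<noteq> s', if s then a \<noteq> b' else a \<noteq> a', if s then b \<noteq> a' else b \<noteq> b'))"

definition dihedral_group :: "(bool \<times> bool \<times> bool) monoid" where
  "dihedral_group = \<lparr>carrier = UNIV, mult = dihedral_mult, one = (False, False, False)\<rparr>"

lemma group_dihedral_group: "group dihedral_group"
proof (rule groupI)
  fix t :: "bool \<times> bool \<times> bool"
  obtain s a b where t: "t = (s, a, b)" by (cases t)
  show "\<exists>t'\<in>carrier dihedral_group. t' \<otimes>\<^bsub>dihedral_group\<^esub> t = \<one>\<^bsub>dihedral_group\<^esub>"
    by (rule bexI[of _ "if s then (s, b, a) else (s, a, b)"]) (auto simp: dihedral_group_def dihedral_mult_def t)
qed (auto simp: dihedral_group_def dihedral_mult_def split: prod.splits)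

lemma UNIV_bool_triples:
  "(UNIV :: (bool \<times> bool \<times> bool) set) =
    {(False, False, False), (True, False, True), (False, True, True), (True, True, False),
     (False, True, False), (False, False, True), (True, False, False), (True, True, True)}"
  by auto

lemma sum_UNIV_bool_triples:
  fixes f :: "bool \<times> bool \<times> bool \<Rightarrow> 'a::comm_monoid_add"
  shows "(\<Sum>t\<in>UNIV. f t) = f (False, False, False) + f (True, False, True) + f (False, True, True) +
    f (True, True, False) + f (False, True, False) + f (False, False, True) + f (True, False, False) +
    f (True, True, True)"
  unfolding UNIV_bool_triples by (simp add: ac_simps)

lemma D4_eq_range_dihedral: "D4 n = range (dihedral n)"
  unfolding D4_def UNIV_bool_triples by (simp add: dihedral_def flip_def)

lemma dihedral_in_grid: "x \<in> grid n \<Longrightarrow> dihedral n t x \<in> grid n"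
  by (cases x; cases t) (auto simp: dihedral_def flip_def grid_def)

lemma dihedral_mult_apply:
  "x \<in> grid n \<Longrightarrow> dihedral n (dihedral_mult t t') x = dihedral n t (dihedral n t' x)"
  by (cases x; cases t; cases t') (auto simp: dihedral_def flip_def grid_def dihedral_mult_def)

lemma group_action_dihedral_cells:
  "group_action dihedral_group (grid n) (\<lambda>t. restrict (dihedral n t) (grid n))"
proof (rule group_actionI)
  show "group dihedral_group" by (rule group_dihedral_group)
next
  fix x assume "x \<in> grid n"
  then show "restrict (dihedral n \<one>\<^bsub>dihedral_group\<^esub>) (grid n) x = x"
    by (cases x) (simp add: dihedral_group_def dihedral_def flip_def)
qed (simp_all add: dihedral_in_grid dihedral_mult_apply dihedral_group_def)

lemma card_orbits_boards:
  "card (Defs.orbits n r) * 8 = (\<Sum>t\<in>UNIV. card {B \<in> boards n r. dihedral n t ` B = B})"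
proof -
  define act where "act t = (\<lambda>B \<in> boards n r. restrict (dihedral n t) (grid n) ` B)" for t
  have act_apply: "act t B = dihedral n t ` B" if "B \<in> boards n r" for t B
    using that by (auto simp: act_def boards_def)
  have action: "group_action dihedral_group (boards n r) act"
    unfolding act_def boards_def
    by (rule group_action.group_action_on_card_subsets[OF group_action_dihedral_cells])
  have carrier: "carrier dihedral_group = UNIV"
    by (simp add: dihedral_group_def)
  have "Defs.orbit n B = Group_Action.orbit dihedral_group act B" if "B \<in> boards n r" for B
    unfolding Defs.orbit_def Group_Action.orbit_def D4_eq_range_dihedral carrier
    using that by (auto simp: act_apply)
  then have orbits: "Group_Action.orbits dihedral_group (boards n r) act = Defs.orbits n r"
    unfolding Defs.orbits_def Group_Action.orbits_def by (auto simp: Setcompr_eq_image)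
  have invariants: "invariants (boards n r) act t = {B \<in> boards n r. dihedral n t ` B = B}" for t
    unfolding invariants_def by (simp add: act_apply cong: conj_cong)
  have order: "order dihedral_group = 8"
    by (simp add: order_def carrier card_UNIV_bool flip: UNIV_Times_UNIV)
  have "finite (boards n r)"
    by (simp add: boards_def grid_def)
  with group_action.burnside[OF action] show ?thesis
    unfolding orbits invariants order carrier by simp
qed

lemma card_grid: "card (grid n) = n^2"
  by (simp add: grid_def card_cartesian_product power2_eq_square)

lemma card_fixed_boards:
  assumes "L > 0" and period: "\<And>x. x \<in> grid n \<Longrightarrow> (dihedral n t ^^ L) x = x"
    and orbit_card: "\<And>x. x \<in> grid n \<Longrightarrow> dihedral n t x \<noteq> x \<Longrightarrow> card (Orbits.orbit (dihedral n t) x) = L"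
  shows "card {B \<in> boards n r. dihedral n t ` B = B} =
    (\<Sum>s=0..r. (card {x \<in> grid n. dihedral n t x = x} choose s) *
       binq ((n^2 - card {x \<in> grid n. dihedral n t x = x}) div L) ((of_nat r - of_nat s) / of_nat L))"
proof -
  interpret periodic_map "grid n" "dihedral n t" L
    using assms(1) period dihedral_in_grid by unfold_locales
  have "{B \<in> boards n r. dihedral n t ` B = B} = {B. B \<subseteq> grid n \<and> card B = r \<and> dihedral n t ` B = B}"
    by (auto simp: boards_def)
  moreover have "finite (grid n)" by (simp add: grid_def)
  ultimately show ?thesis
    using card_invariant_subsets[OF _ orbit_card] card_grid by simp
qed

lemma card_fixed_boards_involution:
  assumes "\<And>x. x \<in> grid n \<Longrightarrow> dihedral n t (dihedral n t x) = x"
  shows "card {B \<in> boards n r. dihedral n t ` B = B} =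
    (\<Sum>s=0..r. (card {x \<in> grid n. dihedral n t x = x} choose s) *
       binq ((n^2 - card {x \<in> grid n. dihedral n t x = x}) div 2) ((of_nat r - of_nat s) / 2))"
proof -
  have period: "(dihedral n t ^^ 2) x = x" if "x \<in> grid n" for x
    using assms[OF that] by (simp add: numeral_2_eq_2)
  have "{..<2::nat} = {0, 1}" by auto
  then have "Orbits.orbit (dihedral n t) x = {x, dihedral n t x}" if "x \<in> grid n" for x
    unfolding orbit_eq_image_funpow[OF period[OF that] zero_less_numeral] by simp
  then show ?thesis
    using card_fixed_boards[of 2 n t r] period by simp
qed

lemma sum_choose_one:
  fixes f :: "nat \<Rightarrow> nat"
  assumes "r \<ge> 1"
  shows "(\<Sum>s=0..r. (1 choose s) * f s) = f 0 + f 1"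
proof -
  have "(\<Sum>s=0..r. (1 choose s) * f s) = (\<Sum>s\<in>{0, 1}. (1 choose s) * f s)"
    using assms by (intro sum.mono_neutral_right) (auto simp: binomial_eq_0)
  then show ?thesis by simp
qed

lemma binq_half_sum:
  assumes "r \<ge> 1"
  shows "binq M (of_nat r / 2) + binq M ((of_nat r - 1) / 2) = M choose (r div 2)"
proof -
  have half: "binq M (of_nat m / 2) = (if even m then M choose (m div 2) else 0)" for m
    using binq_of_nat_div[of 2 M m] by simp
  have "(of_nat r - 1 :: rat) = of_nat (r - 1)"
    using assms by (simp add: of_nat_diff)
  then have "binq M (of_nat r / 2) + binq M ((of_nat r - 1) / 2) =
      (if even r then M choose (r div 2) else 0) + (if even (r - 1) then M choose ((r - 1) div 2) else 0)"
    by (simp only: half)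
  also have "\<dots> = M choose (r div 2)"
  proof (cases "even r")
    case True
    with assms show ?thesis by simp
  next
    case False
    then obtain q where "r = 2 * q + 1" by (rule oddE)
    then show ?thesis by simp
  qed
  finally show ?thesis .
qed

lemma card_fixed_boards_identity:
  "card {B \<in> boards n r. dihedral n (False, False, False) ` B = B} = n^2 choose r"
proof -
  have "dihedral n (False, False, False) ` B = B" for B
    by (simp add: dihedral_def flip_def case_prod_unfold)
  then show ?thesis
    by (simp add: boards_def n_subsets card_grid[symmetric] grid_def)
qed

lemma quarter_turn_period:
  assumes "t = (True, False, True) \<or> t = (True, True, False)" and "x \<in> grid n"
  shows "(dihedral n t ^^ 4) x = x"
  using assms by (cases x) (auto simp: dihedral_def flip_def grid_def numeral_eq_Suc)

lemma quarter_turn_orbit: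
  assumes "t = (True, False, True) \<or> t = (True, True, False)" and "x \<in> grid n"
  shows "Orbits.orbit (dihedral n t) x =
    {x, dihedral n t x, dihedral n t (dihedral n t x), dihedral n t (dihedral n t (dihedral n t x))}"
proof -
  have "{..<4::nat} = {0, 1, 2, 3}" by auto
  then show ?thesis
    unfolding orbit_eq_image_funpow[OF quarter_turn_period[OF assms] zero_less_numeral]
    by (simp add: numeral_eq_Suc)
qed

lemma quarter_turn_distinct_iterates:
  assumes "t = (True, False, True) \<or> t = (True, True, False)"
    and "x \<in> grid (2*k+1)" and "dihedral (2*k+1) t x \<noteq> x"
  shows "distinct [x, dihedral (2*k+1) t x, dihedral (2*k+1) t (dihedral (2*k+1) t x),
    dihedral (2*k+1) t (dihedral (2*k+1) t (dihedral (2*k+1) t x))]"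
  using assms by (cases x) (auto simp: dihedral_def flip_def grid_def)

lemma card_fixed_boards_quarter_turn:
  assumes t: "t = (True, False, True) \<or> t = (True, True, False)" and "r \<ge> 1"
  shows "card {B \<in> boards (2*k+1) r. dihedral (2*k+1) t ` B = B} =
    binq (k*(k+1)) (of_nat r / 4) + binq (k*(k+1)) ((of_nat r - 1) / 4)"
proof -
  have "card (Orbits.orbit (dihedral (2*k+1) t) x) = 4"
    if "x \<in> grid (2*k+1)" and "dihedral (2*k+1) t x \<noteq> x" for x
    using quarter_turn_orbit[OF t that(1)] distinct_card[OF quarter_turn_distinct_iterates[OF t that]]
    by simp
  moreover have "{x \<in> grid (2*k+1). dihedral (2*k+1) t x = x} = {(k, k)}"
    using t by (auto simp: dihedral_def flip_def grid_def)
  moreover have "((2*k+1)^2 - 1) div 4 = k*(k+1)"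
    by (simp add: power2_eq_square algebra_simps)
  ultimately have "card {B \<in> boards (2*k+1) r. dihedral (2*k+1) t ` B = B} =
      (\<Sum>s=0..r. (1 choose s) * binq (k*(k+1)) ((of_nat r - of_nat s) / 4))"
    using card_fixed_boards[of 4 "2*k+1" t r] quarter_turn_period[OF t] by simp
  also have "\<dots> = binq (k*(k+1)) (of_nat r / 4) + binq (k*(k+1)) ((of_nat r - 1) / 4)"
    using sum_choose_one[OF assms(2)] by simp
  finally show ?thesis .
qed

lemma card_fixed_boards_half_turn:
  assumes "r \<ge> 1"
  shows "card {B \<in> boards (2*k+1) r. dihedral (2*k+1) (False, True, True) ` B = B} =
    2*k*(k+1) choose (r div 2)"
proof -
  let ?g = "dihedral (2*k+1) (False, True, True)"
  have "{x \<in> grid (2*k+1). ?g x = x} = {(k, k)}"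
    by (auto simp: dihedral_def flip_def grid_def)
  moreover have "((2*k+1)^2 - 1) div 2 = 2*k*(k+1)"
    by (simp add: power2_eq_square algebra_simps)
  moreover have "?g (?g x) = x" if "x \<in> grid (2*k+1)" for x
    using that by (cases x) (auto simp: dihedral_def flip_def grid_def)
  ultimately show ?thesis
    using card_fixed_boards_involution[of "2*k+1" "(False, True, True)" r]
      sum_choose_one[OF assms] binq_half_sum[OF assms] by simp
qed

lemma card_fixed_cells_reflection:
  assumes "t \<in> {(False, True, False), (False, False, True), (True, False, False), (True, True, True)}"
  shows "card {x \<in> grid (2*k+1). dihedral (2*k+1) t x = x} = 2*k+1"
proof -
  have "{x \<in> grid (2*k+1). dihedral (2*k+1) t x = x} =
    (if t = (False, True, False) then {k} \<times> {0..<2*k+1}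
     else if t = (False, False, True) then {0..<2*k+1} \<times> {k}
     else if t = (True, False, False) then (\<lambda>i. (i, i)) ` {0..<2*k+1}
     else (\<lambda>i. (i, 2*k - i)) ` {0..<2*k+1})"
    using assms by (auto simp: dihedral_def flip_def grid_def)
  then show ?thesis
    using assms by (auto simp: card_cartesian_product card_image inj_on_def)
qed

lemma card_fixed_boards_reflection:
  assumes "t \<in> {(False, True, False), (False, False, True), (True, False, False), (True, True, True)}"
  shows "card {B \<in> boards (2*k+1) r. dihedral (2*k+1) t ` B = B} =
    (\<Sum>s=0..r. ((2*k+1) choose s) * binq (k*(2*k+1)) ((of_nat r - of_nat s) / 2))"
proof -
  have "dihedral (2*k+1) t (dihedral (2*k+1) t x) = x" if "x \<in> grid (2*k+1)" for x
    using assms that by (cases x) (auto simp: dihedral_def flip_def grid_def)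
  moreover have "((2*k+1)^2 - (2*k+1)) div 2 = k*(2*k+1)"
    by (simp add: power2_eq_square algebra_simps)
  ultimately show ?thesis
    using card_fixed_boards_involution[of "2*k+1" t r] card_fixed_cells_reflection[OF assms] by simp
qed

theorem proposition5p2:
  fixes k r :: nat
  assumes "k \<ge> 1" and "1 \<le> r" and "r \<le> (2*k+1)^2"
  shows "(of_nat (card (orbits (2*k+1) r)) :: rat) =
    1/8 * (of_nat ((2*k+1)^2 choose r)
      + 2 * of_nat (binq (k*(k+1)) (of_nat r / 4))
      + 2 * of_nat (binq (k*(k+1)) ((of_nat r - 1) / 4))
      + of_nat (2*k*(k+1) choose (r div 2))
      + 4 * (\<Sum>t=0..r. of_nat ((2*k+1) choose t) * of_nat (binq (k*(2*k+1)) ((of_nat r - of_nat t) / 2))))"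
proof -
  define fixed where "fixed t = card {B \<in> boards (2*k+1) r. dihedral (2*k+1) t ` B = B}" for t
  define quarter where "quarter = binq (k*(k+1)) (of_nat r / 4) + binq (k*(k+1)) ((of_nat r - 1) / 4)"
  define reflection where
    "reflection = (\<Sum>t=0..r. ((2*k+1) choose t) * binq (k*(2*k+1)) ((of_nat r - of_nat t) / 2))"
  have "fixed (False, False, False) = (2*k+1)^2 choose r"
    unfolding fixed_def by (rule card_fixed_boards_identity)
  moreover have "fixed (True, False, True) = quarter" and "fixed (True, True, False) = quarter"
    unfolding fixed_def quarter_def
    by (rule card_fixed_boards_quarter_turn, simp, fact assms(2))+
  moreover have "fixed (False, True, True) = 2*k*(k+1) choose (r div 2)"
    unfolding fixed_def using assms(2) by (rule card_fixed_boards_half_turn)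
  moreover have "fixed (False, True, False) = reflection" and "fixed (False, False, True) = reflection"
    and "fixed (True, False, False) = reflection" and "fixed (True, True, True) = reflection"
    unfolding fixed_def reflection_def by (rule card_fixed_boards_reflection, simp)+
  ultimately have "card (orbits (2*k+1) r) * 8 =
      ((2*k+1)^2 choose r) + 2 * quarter + (2*k*(k+1) choose (r div 2)) + 4 * reflection"
    using card_orbits_boards[of "2*k+1" r, folded fixed_def] by (simp add: sum_UNIV_bool_triples)
  then have "(of_nat (card (orbits (2*k+1) r)) :: rat) * 8 =
      of_nat ((2*k+1)^2 choose r) + 2 * of_nat quarter + of_nat (2*k*(k+1) choose (r div 2)) + 4 * of_nat reflection"
    by (metis (mono_tags) of_nat_add of_nat_mult of_nat_numeral)
  then show ?thesis
    by (simp add: quarter_def reflection_def algebra_simps)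
qed

end
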